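(* For every $n\ge1$, the co-cloaktic monoid $\mathcal A_n^*/{\equiv^{\mathrm{co}}_{\mathrm{clk}}}$ satisfies every semigroup identity satisfied by the monoid $\mathrm{TMat}_n(\mathbb T)$ of $n\times n$ upper triangular tropical matrices.
   Context: $\mathcal A_n=\{a_1<\cdots<a_n\}$. For $w\in\mathcal A_n^*$, $L_{[i,j]}(w)$ is the maximal length of a nondecreasing (not necessarily contiguous) subword of $w$ with all letters in $\{a_i,\dots,a_j\}$; $u\equiv_{\mathrm{clk}}v$ iff $L_{[i,j]}(u)=L_{[i,j]}(v)$ for all $1\le i\le j\le n$. $\mathrm{cmr}(a_\ell)=a_na_{n-1}\cdots a_1$ with $a_{n-\ell+1}$ omitted, extended multiplicatively to words; $u\equiv^{\mathrm{co}}_{\mathrm{clk}}v$ iff $\mathrm{cmr}(u)\equiv_{\mathrm{clk}}\mathrm{cmr}(v)$. $\mathrm{TMat}_n(\mathbb T)$: upper triangular matrices over $\mathbb T=\mathbb R\cup\{-\infty\}$ with max-plus product. A semigroup identity is a formal equality $u=v$ of two distinct nonempty words over variables; $S$ satisfies it if $\varphi(u)=\varphi(v)$ for every homomorphism $\varphi$ from the free semigroup on the variables to $S$. *)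

theory Defs
  imports "HOL-Library.Extended_Real"
begin

(* Alphabet A_n: letter a_i is represented by the natural number i, 1 <= i <= n.
   Words over A_n are nat lists with all letters in {1..n}. *)

definition word_over :: "nat \<Rightarrow> nat list \<Rightarrow> bool" where
  "word_over n w \<longleftrightarrow> set w \<subseteq> {1..n}"

definition Lij :: "nat \<Rightarrow> nat \<Rightarrow> nat list \<Rightarrow> nat" where
  "Lij i j w = Max {length s | s. s \<in> set (subseqs w) \<and> sorted s \<and> set s \<subseteq> {i..j}}"

definition clk_equiv :: "nat \<Rightarrow> nat list \<Rightarrow> nat list \<Rightarrow> bool" where
  "clk_equiv n u v \<longleftrightarrow> (\<forall>i j. 1 \<le> i \<and> i \<le> j \<and> j \<le> n \<longrightarrow> Lij i j u = Lij i j v)"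

definition cmr_letter :: "nat \<Rightarrow> nat \<Rightarrow> nat list" where
  "cmr_letter n l = filter (\<lambda>x. x \<noteq> n - l + 1) (rev [1..<n+1])"

definition cmr :: "nat \<Rightarrow> nat list \<Rightarrow> nat list" where
  "cmr n w = concat (map (cmr_letter n) w)"

definition coclk_equiv :: "nat \<Rightarrow> nat list \<Rightarrow> nat list \<Rightarrow> bool" where
  "coclk_equiv n u v \<longleftrightarrow> clk_equiv n (cmr n u) (cmr n v)"

(* The co-cloaktic monoid A_n^*/coclk satisfies the semigroup identity u = v
   (u, v words over variables of type nat): every semigroup homomorphism from
   the free semigroup to the quotient monoid is determined by an assignment of
   (representative) words over A_n to the variables, possibly empty. *)
definition coclk_satisfies :: "nat \<Rightarrow> nat list \<Rightarrow> nat list \<Rightarrow> bool" where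
  "coclk_satisfies n u v \<longleftrightarrow>
     (\<forall>\<sigma> :: nat \<Rightarrow> nat list. (\<forall>x. word_over n (\<sigma> x)) \<longrightarrow>
        coclk_equiv n (concat (map \<sigma> u)) (concat (map \<sigma> v)))"

(* Tropical semiring T = R \<union> {-\<infinity>}, modelled inside ereal as values \<noteq> \<infinity>.
   n x n matrices: functions nat \<Rightarrow> nat \<Rightarrow> ereal, only indices < n matter. *)
type_synonym tmat = "nat \<Rightarrow> nat \<Rightarrow> ereal"

definition tmat_upper :: "nat \<Rightarrow> tmat \<Rightarrow> bool" where
  "tmat_upper n A \<longleftrightarrow>
     (\<forall>i j. A i j \<noteq> \<infinity>) \<and>
     (\<forall>i j. (i \<ge> n \<or> j \<ge> n) \<longrightarrow> A i j = -\<infinity>) \<and>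
     (\<forall>i j. i < n \<and> j < n \<and> j < i \<longrightarrow> A i j = -\<infinity>)"

definition tmul :: "nat \<Rightarrow> tmat \<Rightarrow> tmat \<Rightarrow> tmat" where
  "tmul n A B = (\<lambda>i j. if i < n \<and> j < n then Max ((\<lambda>k. A i k + B k j) ` {..<n}) else -\<infinity>)"

definition tmat_eval :: "nat \<Rightarrow> (nat \<Rightarrow> tmat) \<Rightarrow> nat list \<Rightarrow> tmat" where
  "tmat_eval n \<phi> w = foldl (tmul n) (\<phi> (hd w)) (map \<phi> (tl w))"

definition tmat_satisfies :: "nat \<Rightarrow> nat list \<Rightarrow> nat list \<Rightarrow> bool" where
  "tmat_satisfies n u v \<longleftrightarrow>
     (\<forall>\<phi>. (\<forall>x. tmat_upper n (\<phi> x)) \<longrightarrow> tmat_eval n \<phi> u = tmat_eval n \<phi> v)"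

end

theory Submission
  imports Defs "HOL-Library.Sublist"
begin

text \<open>The matrix whose (p,q) entry is L_[p+1,q+1](w) (and -\<infinity> below the diagonal) is an
  upper triangular tropical matrix, and w \<mapsto> this matrix is a monoid morphism: a longest
  nondecreasing subword of W @ V with letters in [i,j] splits at the last letter k taken from W
  into one of W in [i,k] and one of V in [k,j]. Hence every identity of TMat_n(\<T>) holds in the
  cloaktic monoid, and since cmr is a monoid morphism, also in the co-cloaktic one.\<close>

definition sorted_subseq_in :: "nat \<Rightarrow> nat \<Rightarrow> nat list \<Rightarrow> nat list \<Rightarrow> bool" where
  "sorted_subseq_in i j w s \<longleftrightarrow> subseq s w \<and> sorted s \<and> set s \<subseteq> {i..j}"

lemma finite_sorted_subseq_in: "finite {s. sorted_subseq_in i j w s}"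
  by (rule finite_subset[of _ "set (subseqs w)"]) (auto simp: sorted_subseq_in_def)

lemma Lij_eq_Max_sorted_subseq_in: "Lij i j w = Max (length ` {s. sorted_subseq_in i j w s})"
proof -
  have "{length s | s. s \<in> set (subseqs w) \<and> sorted s \<and> set s \<subseteq> {i..j}}
        = length ` {s. sorted_subseq_in i j w s}"
    by (auto simp: sorted_subseq_in_def)
  then show ?thesis by (simp add: Lij_def)
qed

lemma length_le_Lij: "sorted_subseq_in i j w s \<Longrightarrow> length s \<le> Lij i j w"
  unfolding Lij_eq_Max_sorted_subseq_in using finite_sorted_subseq_in by (intro Max_ge) auto

lemma Lij_attained: obtains s where "sorted_subseq_in i j w s" "length s = Lij i j w"
proof -
  have "sorted_subseq_in i j w []" by (simp add: sorted_subseq_in_def)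
  then have "Max (length ` {s. sorted_subseq_in i j w s}) \<in> length ` {s. sorted_subseq_in i j w s}"
    using finite_sorted_subseq_in by (intro Max_in) blast+
  then show thesis using that unfolding Lij_eq_Max_sorted_subseq_in by auto
qed

lemma Lij_split_le_Lij_append:
  assumes "i \<le> k" "k \<le> j"
  shows "Lij i k W + Lij k j V \<le> Lij i j (W @ V)"
proof -
  obtain s1 where s1: "sorted_subseq_in i k W s1" "length s1 = Lij i k W" by (rule Lij_attained)
  obtain s2 where s2: "sorted_subseq_in k j V s2" "length s2 = Lij k j V" by (rule Lij_attained)
  have "\<forall>x\<in>set s1. \<forall>y\<in>set s2. x \<le> y"
    using s1(1) s2(1) unfolding sorted_subseq_in_def by fastforce
  then have "sorted_subseq_in i j (W @ V) (s1 @ s2)"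
    using s1(1) s2(1) assms unfolding sorted_subseq_in_def
    by (auto simp: sorted_append intro: list_emb_append_mono)
  from length_le_Lij[OF this] s1 s2 show ?thesis by simp
qed

lemma Lij_append_le_split:
  assumes "i \<le> j"
  obtains k where "k \<in> {i..j}" "Lij i j (W @ V) \<le> Lij i k W + Lij k j V"
proof -
  obtain s where s: "sorted_subseq_in i j (W @ V) s" "length s = Lij i j (W @ V)"
    by (rule Lij_attained)
  then obtain s1 s2 where split: "s = s1 @ s2" "subseq s1 W" "subseq s2 V"
    unfolding sorted_subseq_in_def by (auto elim: subseq_appendE)
  have sorted: "sorted s1" "sorted s2" "\<forall>x\<in>set s1. \<forall>y\<in>set s2. x \<le> y"
    and range: "set s1 \<subseteq> {i..j}" "set s2 \<subseteq> {i..j}"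
    using s(1) split unfolding sorted_subseq_in_def by (auto simp: sorted_append)
  define k where "k = (if s1 = [] then i else last s1)"
  have k: "k \<in> {i..j}"
    using assms subsetD[OF range(1) last_in_set] by (cases "s1 = []") (auto simp: k_def)
  have "\<forall>x\<in>set s1. x \<le> k"
  proof (cases s1 rule: rev_cases)
    case (snoc ys y)
    then show ?thesis using sorted(1) by (auto simp: k_def sorted_append)
  qed simp
  then have "sorted_subseq_in i k W s1"
    using split sorted range unfolding sorted_subseq_in_def by auto
  moreover have "sorted_subseq_in k j V s2"
    using split sorted range unfolding sorted_subseq_in_def by (auto simp: k_def)
  ultimately have "Lij i j (W @ V) \<le> Lij i k W + Lij k j V"
    using s(2) split(1) by (auto dest!: length_le_Lij)
  with k show thesis by (rule that)
qed

definition Lij_matrix :: "nat \<Rightarrow> nat list \<Rightarrow> tmat" where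
  "Lij_matrix n w = (\<lambda>p q. if p < n \<and> q < n \<and> p \<le> q
     then ereal (real (Lij (Suc p) (Suc q) w)) else -\<infinity>)"

lemma tmat_upper_Lij_matrix: "tmat_upper n (Lij_matrix n w)"
  by (auto simp: tmat_upper_def Lij_matrix_def)

lemma tmul_Lij_matrix: "tmul n (Lij_matrix n W) (Lij_matrix n V) = Lij_matrix n (W @ V)"
proof (intro ext)
  fix p q
  let ?f = "\<lambda>k. Lij_matrix n W p k + Lij_matrix n V k q" and ?R = "Lij_matrix n (W @ V) p q"
  show "tmul n (Lij_matrix n W) (Lij_matrix n V) p q = ?R"
  proof (cases "p < n \<and> q < n")
    case False
    then show ?thesis by (auto simp: tmul_def Lij_matrix_def)
  next
    case pq: True
    have upper: "?f k \<le> ?R" if "k < n" for k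
    proof (cases "p \<le> k \<and> k \<le> q")
      case True
      then show ?thesis
        using Lij_split_le_Lij_append[of "Suc p" "Suc k" "Suc q" W V] that pq
        by (simp add: Lij_matrix_def)
    qed (auto simp: Lij_matrix_def)
    obtain k where k: "k < n" "?f k = ?R"
    proof (cases "p \<le> q")
      case True
      then have "Suc p \<le> Suc q" by simp
      then obtain k' where k': "k' \<in> {Suc p..Suc q}"
        "Lij (Suc p) (Suc q) (W @ V) \<le> Lij (Suc p) k' W + Lij k' (Suc q) V"
        by (rule Lij_append_le_split)
      then have "Lij (Suc p) (Suc q) (W @ V) = Lij (Suc p) k' W + Lij k' (Suc q) V"
        using Lij_split_le_Lij_append[of "Suc p" k' "Suc q" W V] by auto
      with k' pq True show thesis
        by (intro that[of "k' - 1"]) (auto simp: Lij_matrix_def)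
    next
      case False
      with pq show thesis by (intro that[of p]) (auto simp: Lij_matrix_def)
    qed
    have "Max (?f ` {..<n}) = ?R"
      using upper k by (intro Max_eqI) (auto intro: image_eqI[of _ _ k])
    with pq show ?thesis by (simp add: tmul_def)
  qed
qed

lemma tmat_eval_Lij_matrix:
  assumes "u \<noteq> []"
  shows "tmat_eval n (\<lambda>x. Lij_matrix n (\<sigma> x)) u = Lij_matrix n (concat (map \<sigma> u))"
proof -
  have "foldl (tmul n) (Lij_matrix n W) (map (\<lambda>x. Lij_matrix n (\<sigma> x)) xs)
        = Lij_matrix n (W @ concat (map \<sigma> xs))" for W xs
    by (induction xs arbitrary: W) (simp_all add: tmul_Lij_matrix)
  with assms show ?thesis by (cases u) (simp_all add: tmat_eval_def)
qed

lemma clk_equiv_of_Lij_matrix_eq: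
  assumes "Lij_matrix n w = Lij_matrix n w'"
  shows "clk_equiv n w w'"
  unfolding clk_equiv_def
proof (intro allI impI)
  fix i j assume "1 \<le> i \<and> i \<le> j \<and> j \<le> n"
  then have "i - 1 < n" "j - 1 < n" "i - 1 \<le> j - 1" "Suc (i - 1) = i" "Suc (j - 1) = j"
    by auto
  then have "Lij_matrix n w (i - 1) (j - 1) = ereal (real (Lij i j w))"
    and "Lij_matrix n w' (i - 1) (j - 1) = ereal (real (Lij i j w'))"
    by (simp_all add: Lij_matrix_def)
  with assms show "Lij i j w = Lij i j w'" by simp
qed

lemma clk_equiv_of_tmat_satisfies:
  assumes "tmat_satisfies n u v" "u \<noteq> []" "v \<noteq> []"
  shows "clk_equiv n (concat (map \<sigma> u)) (concat (map \<sigma> v))"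
proof -
  from assms(1) have "(\<forall>x. tmat_upper n (Lij_matrix n (\<sigma> x)))
    \<longrightarrow> tmat_eval n (\<lambda>x. Lij_matrix n (\<sigma> x)) u = tmat_eval n (\<lambda>x. Lij_matrix n (\<sigma> x)) v"
    unfolding tmat_satisfies_def by (rule spec)
  then have "tmat_eval n (\<lambda>x. Lij_matrix n (\<sigma> x)) u = tmat_eval n (\<lambda>x. Lij_matrix n (\<sigma> x)) v"
    using tmat_upper_Lij_matrix by blast
  then show ?thesis
    using assms(2,3) by (intro clk_equiv_of_Lij_matrix_eq) (simp add: tmat_eval_Lij_matrix)
qed

lemma cmr_concat_map: "cmr n (concat (map \<sigma> u)) = concat (map (\<lambda>x. cmr n (\<sigma> x)) u)"
  by (induction u) (simp_all add: cmr_def)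

theorem mainTheorem10:
  fixes n :: nat and u v :: "nat list"
  assumes "1 \<le> n" and "u \<noteq> []" and "v \<noteq> []" and "u \<noteq> v"
    and "tmat_satisfies n u v"
  shows "coclk_satisfies n u v"
  unfolding coclk_satisfies_def coclk_equiv_def cmr_concat_map
proof (intro allI impI)
  fix \<sigma> :: "nat \<Rightarrow> nat list"
  show "clk_equiv n (concat (map (\<lambda>x. cmr n (\<sigma> x)) u)) (concat (map (\<lambda>x. cmr n (\<sigma> x)) v))"
    using assms(5,2,3) by (rule clk_equiv_of_tmat_satisfies)
qed

end
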